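(* For any nonempty rooted trees $a$ and $b$, $\omega(a\bowtie b)=0$.
   Context: Let $k$ be a field of characteristic $0$. $\mathcal H_{CK}$ is the Connes–Kreimer Hopf algebra of rooted forests (free commutative algebra on nonempty non-planar rooted trees, unit the empty forest, counit $\varepsilon$, coproduct by admissible cuts $\Delta_{CK}(u)=\sum v\otimes w$ over decompositions of the vertex set of $u$ into $V\sqcup W$ with no vertex of $V$ strictly below a vertex of $W$, $v,w$ the induced forests), with convolution $*$. $\delta$ is the character of $\mathcal H_{CK}$ with $\delta(\bullet)=1$ ($\bullet$ the one-vertex tree) and $\delta(t)=0$ for trees with at least two vertices, and $\omega=\log^*\delta=\sum_{n\ge1}\frac{(-1)^{n+1}}{n}(\delta-\varepsilon)^{*n}$. For trees $a=B_+(a_1\cdots a_n)$, $b=B_+(b_1\cdots b_p)$ (where $B_+$ grafts a forest onto a new root): $a\circ b=B_+(a_1\cdots a_nb)$, $a\times b=B_+(a_1\cdots a_nb_1\cdots b_p)$, and $a\bowtie b=a\circ b+b\circ a+a\times b$. *)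

theory Defs
  imports Main "HOL-Library.Multiset"
begin

text \<open>Non-planar rooted trees: a tree is B+ of a (multi)set of trees (its children).
  Every tree is nonempty (has a root). Forests are multisets of trees; the empty
  forest is the unit of the Connes-Kreimer Hopf algebra. Forests form a basis of
  H_CK, so linear functionals on H_CK are functions on forests.\<close>

datatype tree = Node "tree multiset"

type_synonym forest = "tree multiset"

abbreviation Bplus :: "forest \<Rightarrow> tree" where "Bplus \<equiv> Node"

abbreviation single_vertex :: tree where "single_vertex \<equiv> Node {#}"

text \<open>Combining admissible cuts of the components of a forest: the cuts of a product
  of forests are pairs (v1 v2, w1 w2).\<close>

definition cut_prod ::
  "(forest \<times> forest) multiset \<Rightarrow> (forest \<times> forest) multiset \<Rightarrow> (forest \<times> forest) multiset" where
  "cut_prod S T = (\<Sum>(v1, w1) \<in># S. \<Sum>(v2, w2) \<in># T. {#(v1 + v2, w1 + w2)#})"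

definition cuts_prod :: "(forest \<times> forest) multiset multiset \<Rightarrow> (forest \<times> forest) multiset" where
  "cuts_prod M = fold_mset cut_prod {#({#}, {#})#} M"

text \<open>Admissible cuts of a tree, as a multiset of pairs (V-part, W-part), one entry per
  decomposition of the vertex set into V and W with no vertex of V strictly below
  (i.e. an ancestor of) a vertex of W. Either the root is in V (then all vertices are
  in V), or the root is in W and the children forest is cut.\<close>

primrec cutsT :: "tree \<Rightarrow> (forest \<times> forest) multiset" where
  "cutsT (Node F) =
     add_mset ({#Node F#}, {#})
       (image_mset (\<lambda>(v, w). (v, {#Node w#})) (cuts_prod (image_mset cutsT F)))"

definition cutsF :: "forest \<Rightarrow> (forest \<times> forest) multiset" where
  "cutsF F = cuts_prod (image_mset cutsT F)"

text \<open>Convolution of linear functionals via the coproduct Delta_CK.\<close>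

definition conv :: "(forest \<Rightarrow> 'k::field) \<Rightarrow> (forest \<Rightarrow> 'k) \<Rightarrow> forest \<Rightarrow> 'k" where
  "conv f g F = (\<Sum>(v, w) \<in># cutsF F. f v * g w)"

definition counit :: "forest \<Rightarrow> 'k::field" where
  "counit F = (if F = {#} then 1 else 0)"

fun convpow :: "(forest \<Rightarrow> 'k::field) \<Rightarrow> nat \<Rightarrow> forest \<Rightarrow> 'k" where
  "convpow f 0 = counit"
| "convpow f (Suc n) = conv f (convpow f n)"

definition delta_char :: "forest \<Rightarrow> 'k::field" where
  "delta_char F = (\<Prod>t \<in># F. if t = single_vertex then 1 else 0)"

text \<open>omega = log^* delta = sum_{n>=1} (-1)^(n+1)/n (delta - epsilon)^{*n}. On each forest
  only finitely many terms are nonzero, so the series is the (finite) sum over its support.\<close>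

definition omega :: "forest \<Rightarrow> 'k::field_char_0" where
  "omega F = (\<Sum>n \<in> {n. n \<ge> 1 \<and> convpow (\<lambda>G. delta_char G - counit G) n F \<noteq> (0::'k)}.
                 (-1) ^ (n + 1) / of_nat n * convpow (\<lambda>G. delta_char G - counit G) n F)"

fun graft :: "tree \<Rightarrow> tree \<Rightarrow> tree" where
  "graft (Node A) b = Node (add_mset b A)"

fun merge :: "tree \<Rightarrow> tree \<Rightarrow> tree" where
  "merge (Node A) (Node B) = Node (A + B)"

text \<open>a \<bowtie> b = a\<circ>b + b\<circ>a + a\<times>b as an element of H_CK: a formal sum of three one-tree
  forests; a linear functional is evaluated on it by linearity.\<close>

definition bowtie :: "tree \<Rightarrow> tree \<Rightarrow> forest multiset" where
  "bowtie a b = {# {#graft a b#}, {#graft b a#}, {#merge a b#} #}"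

definition lin_eval :: "(forest \<Rightarrow> 'k::field) \<Rightarrow> forest multiset \<Rightarrow> 'k" where
  "lin_eval f X = (\<Sum>F \<in># X. f F)"

end

theory Submission
  imports Defs "HOL-Library.Product_Plus" "HOL-Computational_Algebra.Polynomial"
begin

(*
  Write P_n = delta^{*n} and delta' = delta - epsilon.  Since the counit epsilon is
  the unit of convolution, the binomial theorem gives P_n(F) = sum_k C(n,k) delta'^{*k}(F), and
  delta'^{*k}(F) = 0 as soon as k exceeds the number of vertices of F.  Hence n |-> P_n(F) is a
  polynomial in n whose constant term is epsilon(F) and whose linear coefficient is exactly
  omega(F) = log^* delta (the linear coefficient of the binomial polynomial C(x,k) is
  (-1)^(k+1)/k).  On the other hand every P_n is a character satisfying
  P_n(B+(F)) = sum_{m<n} P_m(F), from which P_n(a o b) + P_n(b o a) + P_n(a x b) = P_n(a) P_n(b)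
  follows by induction on n.  Comparing linear coefficients, the product on the right contributes
  nothing because both factors have constant term epsilon(tree) = 0; thus omega(a bowtie b) = 0.
*)

(* Pairs of forests are added componentwise (HOL-Library.Product_Plus); the product of two
  multisets of cuts is then the multiset of all pairwise sums. *)
lemma cut_prod_eq: "cut_prod S T = (\<Sum>p\<in>#S. \<Sum>q\<in>#T. {#p + q#})"
  unfolding cut_prod_def by (simp add: split_def plus_prod_def)

lemma sum_mset_Sum_mset:
  "(\<Sum>x\<in>#(\<Sum>y\<in>#M. f y). \<phi> x) = (\<Sum>y\<in>#M. \<Sum>x\<in>#f y. \<phi> x)"
  by (induction M) auto

lemma sum_cut_prod:
  "(\<Sum>r\<in>#cut_prod S T. \<phi> r) = (\<Sum>p\<in>#S. \<Sum>q\<in>#T. \<phi> (p + q))"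
  by (simp add: cut_prod_eq sum_mset_Sum_mset multiset.map_comp comp_def)

lemma in_cut_prod: "r \<in># cut_prod S T \<Longrightarrow> \<exists>p\<in>#S. \<exists>q\<in>#T. r = p + q"
  by (auto simp: cut_prod_eq)

(* Both associativity and left commutativity of cut products reduce to this triple-sum form. *)
lemma cut_prod_triple:
  "cut_prod S (cut_prod T U) = (\<Sum>p\<in>#S. \<Sum>q\<in>#T. \<Sum>u\<in>#U. {#p + (q + u)#})"
proof -
  have "cut_prod S (cut_prod T U) = (\<Sum>r\<in>#cut_prod S (cut_prod T U). {#r#})"
    by simp
  then show ?thesis by (simp only: sum_cut_prod)
qed

lemma cut_prod_assoc: "cut_prod S (cut_prod T U) = cut_prod (cut_prod S T) U"
proof -
  have "cut_prod (cut_prod S T) U = (\<Sum>r\<in>#cut_prod (cut_prod S T) U. {#r#})"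
    by simp
  then show ?thesis by (simp only: sum_cut_prod cut_prod_triple add.assoc)
qed

lemma cut_prod_left_commute: "cut_prod S (cut_prod T U) = cut_prod T (cut_prod S U)"
  unfolding cut_prod_triple by (subst sum_mset.swap) (simp only: add.left_commute)

interpretation cut_prod: comp_fun_commute cut_prod
  by unfold_locales (simp add: fun_eq_iff cut_prod_left_commute)

lemma cut_prod_unit: "cut_prod S {#0#} = S"
  by (simp add: cut_prod_eq)

lemma unit_cut_prod: "cut_prod {#0#} S = S"
proof -
  have "(+) 0 = (\<lambda>p. p :: forest \<times> forest)" by auto
  then show ?thesis by (simp add: cut_prod_eq)
qed

lemma cutsF_empty: "cutsF {#} = {#0#}"
  by (simp add: cutsF_def cuts_prod_def zero_prod_def)

lemma cutsF_add_mset: "cutsF (add_mset t F) = cut_prod (cutsT t) (cutsF F)"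
  by (simp add: cutsF_def cuts_prod_def)

lemma cutsF_single: "cutsF {#t#} = cutsT t"
  by (simp add: cutsF_add_mset cutsF_empty cut_prod_unit)

lemma cutsF_union: "cutsF (F + G) = cut_prod (cutsF F) (cutsF G)"
  by (induction F) (simp_all add: cutsF_empty unit_cut_prod cutsF_add_mset cut_prod_assoc)

lemma cutsT_Node:
  "cutsT (Node F) = add_mset ({#Node F#}, {#}) (image_mset (\<lambda>(v, w). (v, {#Node w#})) (cutsF F))"
  by (simp add: cutsF_def)

lemma conv_split: "conv f g F = (\<Sum>p\<in>#cutsF F. f (fst p) * g (snd p))"
  unfolding conv_def by (simp add: split_def)

definition multiplicative :: "(forest \<Rightarrow> 'k::field) \<Rightarrow> bool" where
  "multiplicative f \<longleftrightarrow> (\<forall>F G. f (F + G) = f F * f G)"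

lemma multiplicativeD: "multiplicative f \<Longrightarrow> f (F + G) = f F * f G"
  by (simp add: multiplicative_def)

lemma conv_union:
  assumes "multiplicative f"
  shows "conv f h (F + G) = conv f (\<lambda>w. conv f (\<lambda>w'. h (w + w')) G) F"
  by (simp add: conv_split cutsF_union sum_cut_prod multiplicativeD[OF assms]
      sum_mset_distrib_left mult.assoc)

lemma conv_Node:
  "conv f h {#Node F#} = f {#Node F#} * h {#} + conv f (\<lambda>w. h {#Node w#}) F"
  by (simp add: conv_split cutsF_single cutsT_Node multiset.map_comp comp_def split_def
      del: cutsT.simps)

lemma conv_empty: "conv f h {#} = f {#} * h {#}"
  by (simp add: conv_split cutsF_empty)

lemma sum_mset_sum_swap: "(\<Sum>x\<in>#M. \<Sum>k\<in>K. f x k) = (\<Sum>k\<in>K. \<Sum>x\<in>#M. f x k)"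
  by (induction M) (simp_all add: sum.distrib)

lemma conv_sum_right: "conv f (\<lambda>w. \<Sum>k\<in>K. h k w) F = (\<Sum>k\<in>K. conv f (h k) F)"
  by (simp add: conv_split sum_distrib_left sum_mset_sum_swap)

lemma conv_cmult_right: "conv f (\<lambda>w. c * h w) F = c * conv f h F"
  by (simp add: conv_split sum_mset_distrib_left mult.left_commute)

lemma multiplicative_counit: "multiplicative counit"
  by (simp add: multiplicative_def counit_def)

(* The forest statement follows from the tree
  statement via conv_union; the tree statement follows from the forest statement for the
  children via conv_Node. *)
lemma counit_left_unit_forest:
  fixes h :: "forest \<Rightarrow> 'k::field"
  assumes "\<And>t h. t \<in># F \<Longrightarrow> conv counit h {#t#} = (h {#t#} :: 'k::field)"
  shows "conv counit h F = h F"
  using assms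
proof (induction F arbitrary: h)
  case empty
  then show ?case by (simp add: conv_empty counit_def)
next
  case (add t G)
  have "conv counit h (add_mset t G) = conv counit (\<lambda>w. conv counit (\<lambda>w'. h (w + w')) G) {#t#}"
    using conv_union[OF multiplicative_counit, of h "{#t#}" G] by simp
  also have "\<dots> = conv counit (\<lambda>w. h (w + G)) {#t#}"
    using add.IH add.prems by simp
  also have "\<dots> = h (add_mset t G)"
    using add.prems[of t "\<lambda>w. h (w + G)"] by simp
  finally show ?case .
qed

lemma counit_left_unit_tree: "conv counit h {#t#} = (h {#t#} :: 'k::field)"
proof (induction t arbitrary: h)
  case (Node F)
  have "conv counit (\<lambda>w. h {#Node w#}) F = h {#Node F#}"
    by (rule counit_left_unit_forest) (rule Node.IH)
  moreover have "(counit {#Node F#} :: 'k) = 0" by (simp add: counit_def)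
  ultimately show ?case by (simp add: conv_Node)
qed

lemma counit_left_unit: "conv counit h F = (h F :: 'k::field)"
  by (rule counit_left_unit_forest) (rule counit_left_unit_tree)

lemma conv_multiplicative:
  assumes f: "multiplicative f" and g: "multiplicative g"
  shows "multiplicative (conv f g)"
  unfolding multiplicative_def
proof (intro allI)
  fix F G
  have "conv f g (F + G)
      = (\<Sum>p\<in>#cutsF F. \<Sum>q\<in>#cutsF G. (f (fst p) * g (snd p)) * (f (fst q) * g (snd q)))"
    by (simp add: conv_split cutsF_union sum_cut_prod multiplicativeD[OF f] multiplicativeD[OF g]
        ac_simps)
  also have "\<dots> = conv f g F * conv f g G"
    unfolding conv_split sum_mset_distrib_right by (simp only: sum_mset_distrib_left)
  finally show "conv f g (F + G) = conv f g F * conv f g G" .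
qed

lemma convpow_multiplicative: "multiplicative f \<Longrightarrow> multiplicative (convpow f n)"
  by (induction n) (simp_all add: multiplicative_counit conv_multiplicative)

primrec nv :: "tree \<Rightarrow> nat" where
  "nv (Node F) = Suc (\<Sum>t\<in>#F. nv t)"

definition nvF :: "forest \<Rightarrow> nat" where
  "nvF F = (\<Sum>t\<in>#F. nv t)"

lemma nvF_empty [simp]: "nvF {#} = 0"
  and nvF_add_mset [simp]: "nvF (add_mset t F) = nv t + nvF F"
  and nvF_union [simp]: "nvF (F + G) = nvF F + nvF G"
  by (simp_all add: nvF_def)

lemma nv_pos: "0 < nv t"
  by (cases t) simp

lemma nvF_pos: "F \<noteq> {#} \<Longrightarrow> 0 < nvF F"
  by (cases F) (simp_all add: nv_pos)

lemma cut_weight_forest: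
  assumes "\<And>t p. t \<in># F \<Longrightarrow> p \<in># cutsT t \<Longrightarrow> nvF (fst p) + nvF (snd p) = nv t"
    and "p \<in># cutsF F"
  shows "nvF (fst p) + nvF (snd p) = nvF F"
  using assms
proof (induction F arbitrary: p)
  case empty
  then show ?case by (simp add: cutsF_empty)
next
  case (add t G)
  obtain q r where q: "q \<in># cutsT t" and r: "r \<in># cutsF G" and p: "p = q + r"
    using in_cut_prod add.prems(2) unfolding cutsF_add_mset by blast
  show ?case
    using add.prems(1)[OF _ q] add.IH[OF _ r] add.prems(1) p by simp
qed

lemma cut_weight_tree: "p \<in># cutsT t \<Longrightarrow> nvF (fst p) + nvF (snd p) = nv t"
proof (induction t arbitrary: p)
  case (Node F)
  then consider "p = ({#Node F#}, {#})"
    | q where "q \<in># cutsF F" "p = (fst q, {#Node (snd q)#})"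
    by (auto simp: cutsT_Node split_def simp del: cutsT.simps)
  then show ?case
  proof cases
    case 1
    then show ?thesis by (simp add: nvF_def)
  next
    case (2 q)
    then show ?thesis using cut_weight_forest[OF Node.IH] by (simp add: nvF_def)
  qed
qed

lemma cut_weight: "p \<in># cutsF F \<Longrightarrow> nvF (fst p) + nvF (snd p) = nvF F"
  using cut_weight_forest cut_weight_tree by blast

lemma convpow_vanish:
  assumes "f {#} = 0"
  shows "nvF F < k \<Longrightarrow> convpow f k F = (0 :: 'k::field)"
proof (induction k arbitrary: F)
  case 0
  then show ?case by simp
next
  case (Suc k)
  have "f (fst p) * convpow f k (snd p) = 0" if p: "p \<in># cutsF F" for p
  proof (cases "fst p = {#}")
    case True
    then show ?thesis by (simp add: assms)
  next
    case False
    then have "nvF (snd p) < k" using cut_weight[OF p] nvF_pos[OF False] Suc.prems by simp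
    then show ?thesis using Suc.IH by simp
  qed
  then show ?case by (auto simp: conv_split intro!: sum_mset.neutral)
qed

lemma conv_counit_decompose:
  "conv f h F = conv (\<lambda>G. f G - counit G) h F + (h F :: 'k::field)"
proof -
  have "conv f h F = conv (\<lambda>G. f G - counit G) h F + conv counit h F"
    by (simp add: conv_split algebra_simps flip: sum_mset.distrib)
  then show ?thesis by (simp add: counit_left_unit)
qed

lemma convpow_binomial:
  "convpow f n F = (\<Sum>k\<le>n. of_nat (n choose k) * convpow (\<lambda>G. f G - counit G) k F :: 'k::field)"
proof (induction n arbitrary: F)
  case 0
  then show ?case by simp
next
  case (Suc n)
  define D where "D k = convpow (\<lambda>G. f G - counit G) k F" for k
  have IH: "convpow f n = (\<lambda>w. \<Sum>k\<le>n. of_nat (n choose k) * convpow (\<lambda>G. f G - counit G) k w)"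
    using Suc.IH by (simp add: fun_eq_iff)
  have "convpow f (Suc n) F
      = (\<Sum>k\<le>n. of_nat (n choose k) * D (Suc k)) + (\<Sum>k\<le>n. of_nat (n choose k) * D k)"
    by (simp add: conv_counit_decompose[of f] IH conv_sum_right conv_cmult_right D_def
        distrib_left sum.distrib)
  also have "(\<Sum>k\<le>n. of_nat (n choose k) * D k) = D 0 + (\<Sum>k\<le>n. of_nat (n choose Suc k) * D (Suc k))"
  proof -
    have "(\<Sum>k\<le>Suc n. of_nat (n choose k) * D k) = (\<Sum>k\<le>n. of_nat (n choose k) * D k)"
      by (simp add: binomial_eq_0)
    then show ?thesis by (simp only: sum.atMost_Suc_shift) simp
  qed
  also have "(\<Sum>k\<le>n. of_nat (n choose k) * D (Suc k)) + (D 0 + (\<Sum>k\<le>n. of_nat (n choose Suc k) * D (Suc k)))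
     = D 0 + (\<Sum>k\<le>n. of_nat (Suc n choose Suc k) * D (Suc k))"
    by (simp add: sum.distrib[symmetric] algebra_simps)
  also have "\<dots> = (\<Sum>k\<le>Suc n. of_nat (Suc n choose k) * D k)"
    by (simp only: sum.atMost_Suc_shift) simp
  finally show ?case by (simp add: D_def)
qed

lemma multiplicative_delta: "multiplicative delta_char"
  by (simp add: multiplicative_def delta_char_def)

lemma delta_char_empty: "delta_char {#} = 1"
  by (simp add: delta_char_def)

lemma delta_char_single_Node: "delta_char {#Node F#} = counit F"
  by (simp add: delta_char_def counit_def)

lemma convpow_empty: "f {#} = 1 \<Longrightarrow> convpow f n {#} = (1 :: 'k::field)"
  by (induction n) (simp_all add: conv_empty counit_def)

lemma convpow_delta_Node:
  "convpow delta_char n {#Node F#} = (\<Sum>m<n. convpow delta_char m F :: 'k::field)"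
proof (induction n arbitrary: F)
  case 0
  then show ?case by (simp add: counit_def)
next
  case (Suc n)
  have "convpow delta_char (Suc n) {#Node F#}
      = (counit F + conv delta_char (\<lambda>w. \<Sum>m<n. convpow delta_char m w) F :: 'k)"
    by (simp only: convpow.simps conv_Node delta_char_single_Node Suc.IH)
       (simp add: convpow_empty delta_char_empty)
  also have "\<dots> = (\<Sum>m<Suc n. convpow delta_char m F)"
    by (simp only: conv_sum_right sum.lessThan_Suc_shift convpow.simps)
  finally show ?case .
qed

lemma convpow_delta_bowtie:
  fixes a b :: tree
  shows "convpow delta_char n {#graft a b#} + convpow delta_char n {#graft b a#}
      + convpow delta_char n {#merge a b#}
    = convpow delta_char n {#a#} * (convpow delta_char n {#b#} :: 'k::field)"
proof -
  obtain A B where a: "a = Node A" and b: "b = Node B" by (meson tree.exhaust)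
  let ?P = "\<lambda>m F. convpow delta_char m F :: 'k"
  have mult: "?P m (F + G) = ?P m F * ?P m G" for m F G
    by (rule multiplicativeD[OF convpow_multiplicative[OF multiplicative_delta]])
  have graft_ab: "?P (Suc n) {#graft a b#} = ?P n {#graft a b#} + ?P n {#b#} * ?P n A" for n
    using mult[of n "{#b#}" A] by (simp add: a convpow_delta_Node del: convpow.simps)
  have graft_ba: "?P (Suc n) {#graft b a#} = ?P n {#graft b a#} + ?P n {#a#} * ?P n B" for n
    using mult[of n "{#a#}" B] by (simp add: b convpow_delta_Node del: convpow.simps)
  have merge_ab: "?P (Suc n) {#merge a b#} = ?P n {#merge a b#} + ?P n A * ?P n B" for n
    using mult[of n A B] by (simp add: a b convpow_delta_Node del: convpow.simps)
  have tree_a: "?P (Suc n) {#a#} = ?P n {#a#} + ?P n A" for n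
    by (simp add: a convpow_delta_Node del: convpow.simps)
  have tree_b: "?P (Suc n) {#b#} = ?P n {#b#} + ?P n B" for n
    by (simp add: b convpow_delta_Node del: convpow.simps)
  show ?thesis
  proof (induction n)
    case 0
    then show ?case by (simp add: a b counit_def)
  next
    case (Suc n)
    have "?P (Suc n) {#graft a b#} + ?P (Suc n) {#graft b a#} + ?P (Suc n) {#merge a b#}
      = (?P n {#graft a b#} + ?P n {#graft b a#} + ?P n {#merge a b#})
        + (?P n {#b#} * ?P n A + ?P n {#a#} * ?P n B + ?P n A * ?P n B)"
      by (simp only: graft_ab graft_ba merge_ab) (simp add: algebra_simps)
    also have "\<dots> = ?P (Suc n) {#a#} * ?P (Suc n) {#b#}"
      by (simp only: Suc tree_a tree_b) (simp add: algebra_simps)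
    finally show ?case .
  qed
qed

fun falling_poly :: "nat \<Rightarrow> 'k::field_char_0 poly" where
  "falling_poly 0 = 1"
| "falling_poly (Suc k) = falling_poly k * [:- of_nat k, 1:]"

definition binom_poly :: "nat \<Rightarrow> 'k::field_char_0 poly" where
  "binom_poly k = smult (1 / fact k) (falling_poly k)"

lemma poly_falling_poly: "poly (falling_poly k) x = (\<Prod>i=0..<k. x - of_nat i)"
  by (induction k) (auto simp: prod.atLeast0_lessThan_Suc algebra_simps)

lemma poly_binom_poly: "poly (binom_poly k) (of_nat n) = (of_nat (n choose k) :: 'k::field_char_0)"
proof -
  have "poly (binom_poly k) (of_nat n) = ((of_nat n :: 'k) gchoose k)"
    by (simp add: binom_poly_def poly_falling_poly gbinomial_prod_rev field_simps)
  then show ?thesis by (simp add: binomial_gbinomial)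
qed

lemma mult_linear_poly: "(p :: 'k::field_char_0 poly) * [:c, 1:] = smult c p + pCons 0 p"
  by (simp add: mult_pCons_right)

lemma coeff0_falling_poly: "coeff (falling_poly k :: 'k::field_char_0 poly) 0 = (if k = 0 then 1 else 0)"
  by (induction k) (auto simp: mult_linear_poly)

lemma coeff1_falling_poly: "coeff (falling_poly (Suc k) :: 'k::field_char_0 poly) 1 = (-1)^k * fact k"
proof (induction k)
  case 0
  then show ?case by (simp add: mult_linear_poly)
next
  case (Suc k)
  have "coeff (falling_poly (Suc (Suc k)) :: 'k poly) 1
      = - of_nat (Suc k) * coeff (falling_poly (Suc k)) 1 + coeff (falling_poly (Suc k)) 0"
    by (simp only: falling_poly.simps(2)[of "Suc k"] mult_linear_poly) (simp add: coeff_pCons)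
  also have "\<dots> = (-1)^(Suc k) * fact (Suc k)"
    by (simp only: Suc coeff0_falling_poly) (simp add: algebra_simps)
  finally show ?case .
qed

lemma coeff0_binom_poly: "coeff (binom_poly k :: 'k::field_char_0 poly) 0 = (if k = 0 then 1 else 0)"
  by (simp add: binom_poly_def coeff0_falling_poly)

lemma coeff1_binom_poly:
  "coeff (binom_poly k :: 'k::field_char_0 poly) 1 = (if k = 0 then 0 else (-1)^(k+1) / of_nat k)"
proof (cases k)
  case 0
  then show ?thesis by (simp add: binom_poly_def)
next
  case (Suc j)
  have "coeff (binom_poly k :: 'k poly) 1 = (-1)^j * fact j / (of_nat (Suc j) * fact j)"
    by (simp only: binom_poly_def coeff_smult Suc coeff1_falling_poly fact_Suc of_nat_mult) simp
  also have "\<dots> = (-1)^j / of_nat (Suc j)"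
    by (rule mult_divide_mult_cancel_right) simp
  finally show ?thesis by (simp add: Suc)
qed

lemma poly_eq_of_nat:
  fixes p q :: "'k::field_char_0 poly"
  assumes "\<And>n. poly p (of_nat n) = poly q (of_nat n)"
  shows "p = q"
proof (rule ccontr)
  assume "p \<noteq> q"
  then have "finite {x. poly (p - q) x = 0}" by (intro poly_roots_finite) simp
  moreover have "range (of_nat :: nat \<Rightarrow> 'k) \<subseteq> {x. poly (p - q) x = 0}"
    using assms by auto
  moreover have "infinite (range (of_nat :: nat \<Rightarrow> 'k))"
    by (rule range_inj_infinite) (simp add: inj_on_def)
  ultimately show False using finite_subset by blast
qed

abbreviation delta_bar :: "forest \<Rightarrow> 'k::field" where
  "delta_bar \<equiv> \<lambda>G. delta_char G - counit G"

lemma convpow_delta_bar_vanish: "nvF F < k \<Longrightarrow> convpow delta_bar k F = (0 :: 'k::field)"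
  by (rule convpow_vanish) (simp add: delta_char_empty counit_def)

definition delta_poly :: "nat \<Rightarrow> forest \<Rightarrow> 'k::field_char_0 poly" where
  "delta_poly N F = (\<Sum>k\<le>N. smult (convpow delta_bar k F) (binom_poly k))"

lemma poly_delta_poly:
  assumes "nvF F \<le> N"
  shows "poly (delta_poly N F) (of_nat n) = (convpow delta_char n F :: 'k::field_char_0)"
proof -
  let ?f = "\<lambda>k. of_nat (n choose k) * (convpow delta_bar k F :: 'k)"
  have "poly (delta_poly N F) (of_nat n) = (\<Sum>k\<le>N. ?f k)"
    by (simp add: delta_poly_def poly_sum poly_binom_poly mult.commute)
  also have "\<dots> = (\<Sum>k\<le>N + n. ?f k)"
    by (rule sum.mono_neutral_left) (use assms in \<open>auto intro!: convpow_delta_bar_vanish\<close>)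
  also have "\<dots> = (\<Sum>k\<le>n. ?f k)"
    by (rule sum.mono_neutral_right) (auto simp: binomial_eq_0)
  also have "\<dots> = convpow delta_char n F"
    by (simp add: convpow_binomial[of delta_char])
  finally show ?thesis .
qed

lemma coeff0_delta_poly: "coeff (delta_poly N F :: 'k::field_char_0 poly) 0 = counit F"
proof -
  have "coeff (delta_poly N F :: 'k poly) 0 = (\<Sum>k\<le>N. if k = 0 then convpow delta_bar k F else 0)"
    by (simp add: delta_poly_def coeff_sum coeff0_binom_poly if_distrib cong: if_cong)
  then show ?thesis by simp
qed

lemma omega_eq_coeff1_delta_poly:
  assumes "nvF F \<le> N"
  shows "omega F = coeff (delta_poly N F :: 'k::field_char_0 poly) 1"
proof -
  let ?f = "\<lambda>n. (-1) ^ (n + 1) / of_nat n * (convpow delta_bar n F :: 'k)"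
  have "omega F = (\<Sum>n\<in>{1..N}. ?f n)"
    unfolding omega_def
    by (rule sum.mono_neutral_left)
      (use assms in \<open>auto, metis convpow_delta_bar_vanish le_less_trans not_le\<close>)
  also have "\<dots> = (\<Sum>n\<le>N. convpow delta_bar n F * coeff (binom_poly n) 1)"
    by (rule sum.mono_neutral_cong_left) (auto simp: coeff1_binom_poly[simplified] algebra_simps)
  also have "\<dots> = coeff (delta_poly N F) 1"
    by (simp add: delta_poly_def coeff_sum)
  finally show ?thesis .
qed

theorem mainTheorem18:
  fixes a b :: tree
  shows "lin_eval (omega :: forest \<Rightarrow> 'k::field_char_0) (bowtie a b) = 0"
proof -
  define N where "N = nv a + nv b"
  have bounds: "nvF {#graft a b#} \<le> N" "nvF {#graft b a#} \<le> N" "nvF {#merge a b#} \<le> N"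
    "nvF {#a#} \<le> N" "nvF {#b#} \<le> N"
    by (cases a; cases b; simp add: N_def)+
  let ?X = "delta_poly N {#graft a b#} + delta_poly N {#graft b a#} + delta_poly N {#merge a b#}
    :: 'k poly"
  let ?Y = "delta_poly N {#a#} * delta_poly N {#b#} :: 'k poly"
  have "?X = ?Y"
    by (rule poly_eq_of_nat) (simp add: poly_delta_poly[OF bounds(1)] poly_delta_poly[OF bounds(2)]
        poly_delta_poly[OF bounds(3)] poly_delta_poly[OF bounds(4)] poly_delta_poly[OF bounds(5)]
        convpow_delta_bowtie)
  moreover have "coeff ?Y 1 = 0"
    by (simp add: coeff_mult atMost_Suc coeff0_delta_poly counit_def)
  moreover have "lin_eval (omega :: forest \<Rightarrow> 'k) (bowtie a b) = coeff ?X 1"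
    by (simp add: lin_eval_def bowtie_def omega_eq_coeff1_delta_poly[OF bounds(1)]
        omega_eq_coeff1_delta_poly[OF bounds(2)] omega_eq_coeff1_delta_poly[OF bounds(3)])
  ultimately show ?thesis by simp
qed

end
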